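(* Let $B$ be a finite skew left brace and let $S$ be a maximal subbrace of $B$. Then either $\zeta(B)\subseteq S$ or $\partial(B)\subseteq S$. In particular, $\zeta(B)\cap\partial(B)\subseteq\Phi(B)$.
   Context: A skew left brace (brace) is a set $B$ with two group structures $(B,+)$ and $(B,\cdot)$ with $a(b+c)=ab-a+ac$; $\lambda_a(b)=-a+ab$. A subbrace is a subset that is a subgroup of both groups; a maximal subbrace is a proper subbrace not contained in any other proper subbrace. An ideal is a subset that is a normal subgroup of both groups and $\lambda_b$-invariant for all $b$. The centre is $\zeta(B)=\{a\in B: a+b=b+a=ab=ba\ \forall b\in B\}$. The derived ideal $\partial(B)=[B,B]$ is the smallest ideal of $B$ containing $[B,B]_+$, $[B,B]_\cdot$ and all $ab-(a+b)$. The Frattini subbrace $\Phi(B)$ is the intersection of all maximal subbraces of $B$ (or $B$ if none exist). *)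

theory Defs
  imports "HOL-Algebra.Algebra"
begin

text \<open>A skew left brace is given by two groups G (the additive group, written
with the HOL-Algebra operation of G) and M (the multiplicative group) on the
same carrier, satisfying a(b+c) = ab - a + ac.\<close>

definition skew_brace :: "('a, 'b) monoid_scheme \<Rightarrow> ('a, 'c) monoid_scheme \<Rightarrow> bool" where
  "skew_brace G M \<longleftrightarrow> group G \<and> group M \<and> carrier G = carrier M \<and>
     (\<forall>a\<in>carrier G. \<forall>b\<in>carrier G. \<forall>c\<in>carrier G.
        a \<otimes>\<^bsub>M\<^esub> (b \<otimes>\<^bsub>G\<^esub> c)
          = (a \<otimes>\<^bsub>M\<^esub> b) \<otimes>\<^bsub>G\<^esub> inv\<^bsub>G\<^esub> a \<otimes>\<^bsub>G\<^esub> (a \<otimes>\<^bsub>M\<^esub> c))"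

definition brace_lambda :: "('a, 'b) monoid_scheme \<Rightarrow> ('a, 'c) monoid_scheme \<Rightarrow> 'a \<Rightarrow> 'a \<Rightarrow> 'a" where
  "brace_lambda G M a b = inv\<^bsub>G\<^esub> a \<otimes>\<^bsub>G\<^esub> (a \<otimes>\<^bsub>M\<^esub> b)"

definition subbrace :: "('a, 'b) monoid_scheme \<Rightarrow> ('a, 'c) monoid_scheme \<Rightarrow> 'a set \<Rightarrow> bool" where
  "subbrace G M S \<longleftrightarrow> subgroup S G \<and> subgroup S M"

definition maximal_subbrace :: "('a, 'b) monoid_scheme \<Rightarrow> ('a, 'c) monoid_scheme \<Rightarrow> 'a set \<Rightarrow> bool" where
  "maximal_subbrace G M S \<longleftrightarrow> subbrace G M S \<and> S \<noteq> carrier G \<and>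
     (\<forall>T. subbrace G M T \<and> T \<noteq> carrier G \<and> S \<subseteq> T \<longrightarrow> T = S)"

definition brace_ideal :: "('a, 'b) monoid_scheme \<Rightarrow> ('a, 'c) monoid_scheme \<Rightarrow> 'a set \<Rightarrow> bool" where
  "brace_ideal G M I \<longleftrightarrow> I \<lhd> G \<and> I \<lhd> M \<and>
     (\<forall>b\<in>carrier G. brace_lambda G M b ` I \<subseteq> I)"

definition brace_centre :: "('a, 'b) monoid_scheme \<Rightarrow> ('a, 'c) monoid_scheme \<Rightarrow> 'a set" where
  "brace_centre G M = {a \<in> carrier G. \<forall>b\<in>carrier G.
      a \<otimes>\<^bsub>G\<^esub> b = b \<otimes>\<^bsub>G\<^esub> a \<and> b \<otimes>\<^bsub>G\<^esub> a = a \<otimes>\<^bsub>M\<^esub> b \<and>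
      a \<otimes>\<^bsub>M\<^esub> b = b \<otimes>\<^bsub>M\<^esub> a}"

definition derived_gens :: "('a, 'b) monoid_scheme \<Rightarrow> ('a, 'c) monoid_scheme \<Rightarrow> 'a set" where
  "derived_gens G M =
     {inv\<^bsub>G\<^esub> a \<otimes>\<^bsub>G\<^esub> inv\<^bsub>G\<^esub> b \<otimes>\<^bsub>G\<^esub> a \<otimes>\<^bsub>G\<^esub> b | a b. a \<in> carrier G \<and> b \<in> carrier G}
   \<union> {inv\<^bsub>M\<^esub> a \<otimes>\<^bsub>M\<^esub> inv\<^bsub>M\<^esub> b \<otimes>\<^bsub>M\<^esub> a \<otimes>\<^bsub>M\<^esub> b | a b. a \<in> carrier G \<and> b \<in> carrier G}
   \<union> {(a \<otimes>\<^bsub>M\<^esub> b) \<otimes>\<^bsub>G\<^esub> inv\<^bsub>G\<^esub> (a \<otimes>\<^bsub>G\<^esub> b) | a b. a \<in> carrier G \<and> b \<in> carrier G}"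

definition derived_ideal :: "('a, 'b) monoid_scheme \<Rightarrow> ('a, 'c) monoid_scheme \<Rightarrow> 'a set" where
  "derived_ideal G M = \<Inter>{I. brace_ideal G M I \<and> derived_gens G M \<subseteq> I}"

definition frattini :: "('a, 'b) monoid_scheme \<Rightarrow> ('a, 'c) monoid_scheme \<Rightarrow> 'a set" where
  "frattini G M = (if \<exists>S. maximal_subbrace G M S
      then \<Inter>{S. maximal_subbrace G M S} else carrier G)"

end

theory Submission
  imports Defs
begin

text \<open>Elements of the centre \<open>\<zeta>(B)\<close> act in the same way additively and multiplicatively and
are central in both groups. Hence for any subbrace \<open>S\<close> the set \<open>S + \<zeta>(B) = S \<zeta>(B)\<close> is again a
subbrace, so if \<open>S\<close> is maximal and misses part of the centre then \<open>S + \<zeta>(B) = B\<close>. Writing every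
element as \<open>s + z\<close> with \<open>z\<close> central, conjugations, \<open>\<lambda>\<close>-maps, commutators and the elements
\<open>ab - (a + b)\<close> only depend on the \<open>S\<close>-components; so \<open>S\<close> is an ideal containing all generators
of \<open>\<partial>(B)\<close>.\<close>

definition center :: "('a, 'b) monoid_scheme \<Rightarrow> 'a set" where
  "center G = {z \<in> carrier G. \<forall>x\<in>carrier G. z \<otimes>\<^bsub>G\<^esub> x = x \<otimes>\<^bsub>G\<^esub> z}"

context group
begin

lemma center_subset_carrier: "center G \<subseteq> carrier G"
  unfolding center_def by blast

lemma centerD: "z \<in> center G \<Longrightarrow> x \<in> carrier G \<Longrightarrow> z \<otimes> x = x \<otimes> z"
  unfolding center_def by blast

lemma subgroup_center: "subgroup (center G) G"
proof (rule subgroupI)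
  show "center G \<subseteq> carrier G" by (rule center_subset_carrier)
  show "center G \<noteq> {}" unfolding center_def by force
next
  fix z assume z: "z \<in> center G"
  then have zG: "z \<in> carrier G" unfolding center_def by blast
  have "inv z \<otimes> x = x \<otimes> inv z" if x: "x \<in> carrier G" for x
  proof -
    have "inv z \<otimes> x = inv z \<otimes> (x \<otimes> z) \<otimes> inv z" using zG x by (simp add: m_assoc)
    also have "\<dots> = inv z \<otimes> (z \<otimes> x) \<otimes> inv z" using centerD[OF z x] by simp
    also have "\<dots> = x \<otimes> inv z" using zG x by (simp flip: m_assoc)
    finally show ?thesis .
  qed
  then show "inv z \<in> center G" unfolding center_def using zG by blast
next
  fix z w assume z: "z \<in> center G" and w: "w \<in> center G"
  then have zG: "z \<in> carrier G" and wG: "w \<in> carrier G" unfolding center_def by blast+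
  have "z \<otimes> w \<otimes> x = x \<otimes> (z \<otimes> w)" if x: "x \<in> carrier G" for x
  proof -
    have "z \<otimes> w \<otimes> x = z \<otimes> (x \<otimes> w)" using centerD[OF w x] zG wG x by (simp add: m_assoc)
    also have "\<dots> = x \<otimes> (z \<otimes> w)" using centerD[OF z x] zG wG x by (simp flip: m_assoc)
    finally show ?thesis .
  qed
  then show "z \<otimes> w \<in> center G" unfolding center_def using zG wG by blast
qed

lemma normal_if_subset_center:
  assumes "subgroup K G" and "K \<subseteq> center G"
  shows "K \<lhd> G"
  unfolding normal_inv_iff
proof (intro conjI ballI)
  fix x k assume x: "x \<in> carrier G" and k: "k \<in> K"
  have "k \<in> center G" using k assms(2) by blast
  then have "x \<otimes> k \<otimes> inv x = k \<otimes> x \<otimes> inv x" using x by (simp add: centerD[of k x])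
  also have "\<dots> = k" using x k subgroup.mem_carrier[OF assms(1)] by (simp add: m_assoc)
  finally have "x \<otimes> k \<otimes> inv x = k" .
  then show "x \<otimes> k \<otimes> inv x \<in> K" using k by simp
qed (rule assms(1))

lemma subgroup_set_mult_center:
  assumes "subgroup H G" and "subgroup K G" and "K \<subseteq> center G"
  shows "subgroup (H <#> K) G"
proof -
  have K: "K \<lhd> G" using normal_if_subset_center assms(2,3) .
  then have "subgroup (K <#> H) G"
    using assms(1) by (simp add: second_isomorphism_grp.normal_set_mult_subgroup
        second_isomorphism_grp_def second_isomorphism_grp_axioms_def)
  then show ?thesis using commut_normal[OF assms(1) K] by simp
qed

lemma mult_center_mult:
  assumes "h \<in> carrier G" "h' \<in> carrier G" "k \<in> center G" "k' \<in> carrier G"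
  shows "h \<otimes> k \<otimes> (h' \<otimes> k') = h \<otimes> h' \<otimes> (k \<otimes> k')"
proof -
  have "k \<in> carrier G" using assms(3) center_subset_carrier by blast
  then have "h \<otimes> k \<otimes> (h' \<otimes> k') = h \<otimes> (k \<otimes> h') \<otimes> k'" using assms by (simp add: m_assoc)
  also have "\<dots> = h \<otimes> h' \<otimes> (k \<otimes> k')"
    using centerD[OF assms(3) assms(2)] \<open>k \<in> carrier G\<close> assms by (simp add: m_assoc)
  finally show ?thesis .
qed

lemma inv_mult_center_cancel:
  assumes "u \<in> carrier G" "v \<in> carrier G" "k \<in> center G"
  shows "inv (u \<otimes> k) \<otimes> (v \<otimes> k) = inv u \<otimes> v"
proof -
  have kG: "k \<in> carrier G" using assms(3) center_subset_carrier by blast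
  have "inv (u \<otimes> k) \<otimes> (v \<otimes> k) = inv k \<otimes> (inv u \<otimes> v \<otimes> k)"
    using assms(1,2) kG by (simp add: m_assoc inv_mult_group)
  also have "\<dots> = inv k \<otimes> (k \<otimes> (inv u \<otimes> v))"
    using centerD[OF assms(3), of "inv u \<otimes> v"] assms(1,2) by simp
  also have "\<dots> = inv u \<otimes> v"
    using assms(1,2) kG by (simp flip: m_assoc)
  finally show ?thesis .
qed

lemma mult_inv_mult_cancel:
  assumes "u \<in> carrier G" "v \<in> carrier G" "w \<in> carrier G"
  shows "u \<otimes> w \<otimes> inv (v \<otimes> w) = u \<otimes> inv v"
  using assms by (simp add: m_assoc inv_mult_group flip: m_assoc[of w "inv w"])

lemma conj_mult_center:
  assumes "h \<in> carrier G" "x \<in> carrier G" "k \<in> center G"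
  shows "h \<otimes> k \<otimes> x \<otimes> inv (h \<otimes> k) = h \<otimes> x \<otimes> inv h"
proof -
  have "k \<in> carrier G" using assms(3) center_subset_carrier by blast
  then have "h \<otimes> k \<otimes> x = h \<otimes> x \<otimes> k" using centerD[OF assms(3) assms(2)] assms by (simp add: m_assoc)
  then show ?thesis using assms \<open>k \<in> carrier G\<close> by (simp add: mult_inv_mult_cancel)
qed

lemma commutator_mult_center:
  assumes "h \<in> carrier G" "h' \<in> carrier G" "k \<in> center G" "k' \<in> center G"
  shows "inv (h \<otimes> k) \<otimes> inv (h' \<otimes> k') \<otimes> (h \<otimes> k) \<otimes> (h' \<otimes> k')
       = inv h \<otimes> inv h' \<otimes> h \<otimes> h'"
proof -
  have kG: "k \<in> carrier G" "k' \<in> carrier G" using assms(3,4) center_subset_carrier by blast+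
  have kk: "k \<otimes> k' \<in> center G" "k' \<otimes> k = k \<otimes> k'"
    using subgroup.m_closed[OF subgroup_center assms(3,4)] centerD[OF assms(3) kG(2)] by auto
  have "inv (h \<otimes> k) \<otimes> inv (h' \<otimes> k') \<otimes> (h \<otimes> k) \<otimes> (h' \<otimes> k')
      = inv (h' \<otimes> k' \<otimes> (h \<otimes> k)) \<otimes> (h \<otimes> k \<otimes> (h' \<otimes> k'))"
    using assms(1,2) kG by (simp add: m_assoc inv_mult_group)
  also have "\<dots> = inv (h' \<otimes> h \<otimes> (k \<otimes> k')) \<otimes> (h \<otimes> h' \<otimes> (k \<otimes> k'))"
    using assms kG kk(2) by (simp add: mult_center_mult)
  also have "\<dots> = inv h \<otimes> inv h' \<otimes> h \<otimes> h'"
    using assms(1,2) kk(1) by (simp add: inv_mult_center_cancel m_assoc inv_mult_group)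
  finally show ?thesis .
qed

lemma normal_if_set_mult_center:
  assumes "subgroup H G" and "H <#> K = carrier G" and "K \<subseteq> center G"
  shows "H \<lhd> G"
  unfolding normal_inv_iff
proof (intro conjI ballI)
  fix x g assume x: "x \<in> carrier G" and g: "g \<in> H"
  obtain h k where hk: "h \<in> H" "k \<in> K" "x = h \<otimes> k"
    using x assms(2) unfolding set_mult_def by blast
  have "x \<otimes> g \<otimes> inv x = h \<otimes> g \<otimes> inv h"
    using hk g assms(3) subgroup.mem_carrier[OF assms(1)] by (auto simp: conj_mult_center)
  then show "x \<otimes> g \<otimes> inv x \<in> H"
    using hk(1) g assms(1) by (simp add: subgroup.m_closed subgroup.m_inv_closed)
qed (rule assms(1))

end

locale skew_left_brace = G: group G + M: group M
  for G :: "('a, 'b) monoid_scheme" and M :: "('a, 'c) monoid_scheme" +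
  assumes carrier_eq: "carrier M = carrier G"
    and left_distrib: "\<lbrakk>a \<in> carrier G; b \<in> carrier G; c \<in> carrier G\<rbrakk> \<Longrightarrow>
      a \<otimes>\<^bsub>M\<^esub> (b \<otimes>\<^bsub>G\<^esub> c) = (a \<otimes>\<^bsub>M\<^esub> b) \<otimes>\<^bsub>G\<^esub> inv\<^bsub>G\<^esub> a \<otimes>\<^bsub>G\<^esub> (a \<otimes>\<^bsub>M\<^esub> c)"

lemma skew_left_braceI: "skew_brace G M \<Longrightarrow> skew_left_brace G M"
  unfolding skew_brace_def skew_left_brace_def skew_left_brace_axioms_def by blast

context skew_left_brace
begin

lemmas M_closed [simp] = M.m_closed[unfolded carrier_eq] M.inv_closed[unfolded carrier_eq]

lemma one_eq: "\<one>\<^bsub>M\<^esub> = \<one>\<^bsub>G\<^esub>"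
proof -
  have one_M: "\<one>\<^bsub>M\<^esub> \<in> carrier G" using M.one_closed by (simp add: carrier_eq)
  have "\<one>\<^bsub>G\<^esub> = \<one>\<^bsub>M\<^esub> \<otimes>\<^bsub>M\<^esub> (\<one>\<^bsub>G\<^esub> \<otimes>\<^bsub>G\<^esub> \<one>\<^bsub>G\<^esub>)"
    by (simp add: carrier_eq)
  also have "\<dots> = \<one>\<^bsub>G\<^esub> \<otimes>\<^bsub>G\<^esub> inv\<^bsub>G\<^esub> \<one>\<^bsub>M\<^esub> \<otimes>\<^bsub>G\<^esub> \<one>\<^bsub>G\<^esub>"
    using left_distrib[OF one_M G.one_closed G.one_closed] by (simp add: carrier_eq)
  finally have "\<one>\<^bsub>G\<^esub> = inv\<^bsub>G\<^esub> \<one>\<^bsub>M\<^esub>" using one_M by simp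
  then have "inv\<^bsub>G\<^esub> \<one>\<^bsub>G\<^esub> = \<one>\<^bsub>M\<^esub>" using one_M by simp
  then show ?thesis by simp
qed

lemma mem_brace_centre_iff:
  "z \<in> brace_centre G M \<longleftrightarrow>
     z \<in> center G \<and> z \<in> center M \<and> (\<forall>b\<in>carrier G. z \<otimes>\<^bsub>M\<^esub> b = z \<otimes>\<^bsub>G\<^esub> b)"
  unfolding brace_centre_def center_def carrier_eq by (intro iffI; clarsimp; metis)

lemma brace_centre_subset_carrier: "brace_centre G M \<subseteq> carrier G"
  unfolding brace_centre_def by blast

lemma brace_centre_subset_center_add: "brace_centre G M \<subseteq> center G"
  using mem_brace_centre_iff by blast

lemma brace_centre_subset_center_mult: "brace_centre G M \<subseteq> center M"
  using mem_brace_centre_iff by blast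

lemma mult_brace_centre_left:
  "z \<in> brace_centre G M \<Longrightarrow> b \<in> carrier G \<Longrightarrow> z \<otimes>\<^bsub>M\<^esub> b = z \<otimes>\<^bsub>G\<^esub> b"
  using mem_brace_centre_iff by blast

lemma mult_brace_centre_right:
  "z \<in> brace_centre G M \<Longrightarrow> b \<in> carrier G \<Longrightarrow> b \<otimes>\<^bsub>M\<^esub> z = b \<otimes>\<^bsub>G\<^esub> z"
  unfolding brace_centre_def by simp

lemma inv_brace_centre:
  assumes "z \<in> brace_centre G M"
  shows "inv\<^bsub>M\<^esub> z = inv\<^bsub>G\<^esub> z"
proof (rule M.inv_equality)
  have z: "z \<in> carrier G" using assms brace_centre_subset_carrier by blast
  then show "inv\<^bsub>G\<^esub> z \<otimes>\<^bsub>M\<^esub> z = \<one>\<^bsub>M\<^esub>"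
    using mult_brace_centre_right[OF assms] one_eq by simp
  show "z \<in> carrier M" "inv\<^bsub>G\<^esub> z \<in> carrier M" using z by (simp_all add: carrier_eq)
qed

lemma subgroup_brace_centre_add: "subgroup (brace_centre G M) G"
proof (rule G.subgroupI)
  show "brace_centre G M \<subseteq> carrier G" by (rule brace_centre_subset_carrier)
  have "\<one>\<^bsub>G\<^esub> \<in> brace_centre G M"
    unfolding mem_brace_centre_iff
    using subgroup.one_closed[OF G.subgroup_center] subgroup.one_closed[OF M.subgroup_center]
    by (simp add: one_eq carrier_eq)
  then show "brace_centre G M \<noteq> {}" by blast
next
  fix z assume z: "z \<in> brace_centre G M"
  then have zG: "z \<in> carrier G" using brace_centre_subset_carrier by blast
  have "inv\<^bsub>G\<^esub> z \<otimes>\<^bsub>M\<^esub> b = inv\<^bsub>G\<^esub> z \<otimes>\<^bsub>G\<^esub> b" if b: "b \<in> carrier G" for b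
  proof (rule G.inv_solve_left[THEN iffD2])
    have "z \<otimes>\<^bsub>G\<^esub> (inv\<^bsub>G\<^esub> z \<otimes>\<^bsub>M\<^esub> b) = z \<otimes>\<^bsub>M\<^esub> (inv\<^bsub>M\<^esub> z \<otimes>\<^bsub>M\<^esub> b)"
      using mult_brace_centre_left[OF z] inv_brace_centre[OF z] zG b by simp
    also have "\<dots> = b" using zG b by (simp add: carrier_eq flip: M.m_assoc)
    finally show "b = z \<otimes>\<^bsub>G\<^esub> (inv\<^bsub>G\<^esub> z \<otimes>\<^bsub>M\<^esub> b)" by simp
  qed (use zG b in simp_all)
  moreover have "inv\<^bsub>G\<^esub> z \<in> center G"
    using z brace_centre_subset_center_add subgroup.m_inv_closed[OF G.subgroup_center] by blast
  moreover have "inv\<^bsub>M\<^esub> z \<in> center M"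
    using z brace_centre_subset_center_mult subgroup.m_inv_closed[OF M.subgroup_center] by blast
  ultimately show "inv\<^bsub>G\<^esub> z \<in> brace_centre G M"
    unfolding mem_brace_centre_iff inv_brace_centre[OF z] by blast
next
  fix z w assume z: "z \<in> brace_centre G M" and w: "w \<in> brace_centre G M"
  then have zG: "z \<in> carrier G" and wG: "w \<in> carrier G"
    using brace_centre_subset_carrier by blast+
  have zw: "z \<otimes>\<^bsub>M\<^esub> w = z \<otimes>\<^bsub>G\<^esub> w" using mult_brace_centre_left[OF z wG] .
  have "z \<otimes>\<^bsub>G\<^esub> w \<otimes>\<^bsub>M\<^esub> b = z \<otimes>\<^bsub>G\<^esub> w \<otimes>\<^bsub>G\<^esub> b" if b: "b \<in> carrier G" for b
  proof -
    have "z \<otimes>\<^bsub>G\<^esub> w \<otimes>\<^bsub>M\<^esub> b = z \<otimes>\<^bsub>M\<^esub> (w \<otimes>\<^bsub>M\<^esub> b)"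
      using zw zG wG b by (simp add: M.m_assoc carrier_eq flip: zw)
    also have "\<dots> = z \<otimes>\<^bsub>G\<^esub> w \<otimes>\<^bsub>G\<^esub> b"
      using mult_brace_centre_left z w zG wG b by (simp add: G.m_assoc)
    finally show ?thesis .
  qed
  moreover have "z \<otimes>\<^bsub>G\<^esub> w \<in> center G"
    using z w brace_centre_subset_center_add subgroup.m_closed[OF G.subgroup_center] by blast
  moreover have "z \<otimes>\<^bsub>M\<^esub> w \<in> center M"
    using z w brace_centre_subset_center_mult subgroup.m_closed[OF M.subgroup_center] by blast
  ultimately show "z \<otimes>\<^bsub>G\<^esub> w \<in> brace_centre G M"
    unfolding mem_brace_centre_iff zw by blast
qed

lemma subgroup_brace_centre_mult: "subgroup (brace_centre G M) M"
proof (rule M.subgroupI)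
  show "brace_centre G M \<subseteq> carrier M" using brace_centre_subset_carrier by (simp add: carrier_eq)
  show "brace_centre G M \<noteq> {}" using subgroup.one_closed[OF subgroup_brace_centre_add] by blast
next
  fix z assume "z \<in> brace_centre G M"
  then show "inv\<^bsub>M\<^esub> z \<in> brace_centre G M"
    using inv_brace_centre subgroup.m_inv_closed[OF subgroup_brace_centre_add] by simp
next
  fix z w assume "z \<in> brace_centre G M" "w \<in> brace_centre G M"
  then show "z \<otimes>\<^bsub>M\<^esub> w \<in> brace_centre G M"
    using mult_brace_centre_left brace_centre_subset_carrier
      subgroup.m_closed[OF subgroup_brace_centre_add] by auto
qed

lemma set_mult_brace_centre:
  assumes "S \<subseteq> carrier G"
  shows "S <#>\<^bsub>M\<^esub> brace_centre G M = S <#>\<^bsub>G\<^esub> brace_centre G M"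
  unfolding set_mult_def using mult_brace_centre_right assms by (intro SUP_cong) auto

lemma subbrace_set_mult_brace_centre:
  assumes "subbrace G M S"
  shows "subbrace G M (S <#>\<^bsub>G\<^esub> brace_centre G M)"
proof -
  have SG: "subgroup S G" and SM: "subgroup S M" using assms unfolding subbrace_def by blast+
  have "subgroup (S <#>\<^bsub>G\<^esub> brace_centre G M) G"
    using G.subgroup_set_mult_center[OF SG subgroup_brace_centre_add brace_centre_subset_center_add] .
  moreover have "subgroup (S <#>\<^bsub>M\<^esub> brace_centre G M) M"
    using M.subgroup_set_mult_center[OF SM subgroup_brace_centre_mult brace_centre_subset_center_mult] .
  ultimately show ?thesis
    unfolding subbrace_def using set_mult_brace_centre[OF subgroup.subset[OF SG]] by simp
qed

lemma set_mult_brace_centre_eq_carrier: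
  assumes max: "maximal_subbrace G M S" and "\<not> brace_centre G M \<subseteq> S"
  shows "S <#>\<^bsub>G\<^esub> brace_centre G M = carrier G"
proof (rule ccontr)
  let ?T = "S <#>\<^bsub>G\<^esub> brace_centre G M"
  assume "?T \<noteq> carrier G"
  have SG: "subgroup S G" using max unfolding maximal_subbrace_def subbrace_def by blast
  have "S \<subseteq> ?T"
    using subgroup.one_closed[OF subgroup_brace_centre_add] subgroup.mem_carrier[OF SG]
    unfolding set_mult_def by force
  then have "?T = S"
    using max \<open>?T \<noteq> carrier G\<close> subbrace_set_mult_brace_centre
    unfolding maximal_subbrace_def by blast
  moreover have "brace_centre G M \<subseteq> ?T"
    using subgroup.one_closed[OF SG] brace_centre_subset_carrier
    unfolding set_mult_def by force
  ultimately show False using assms(2) by blast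
qed

lemma brace_lambda_mult_brace_centre:
  assumes "s \<in> carrier G" "h \<in> carrier G" "z \<in> brace_centre G M"
  shows "brace_lambda G M (s \<otimes>\<^bsub>G\<^esub> z) h = brace_lambda G M s h"
proof -
  have z: "z \<in> carrier G" "z \<in> center M" "z \<in> center G"
    using assms(3) brace_centre_subset_carrier brace_centre_subset_center_mult
      brace_centre_subset_center_add by blast+
  have "(s \<otimes>\<^bsub>G\<^esub> z) \<otimes>\<^bsub>M\<^esub> h = s \<otimes>\<^bsub>M\<^esub> (z \<otimes>\<^bsub>M\<^esub> h)"
    using mult_brace_centre_right[OF assms(3) assms(1), symmetric] assms z by (simp add: M.m_assoc carrier_eq)
  also have "\<dots> = s \<otimes>\<^bsub>M\<^esub> h \<otimes>\<^bsub>M\<^esub> z"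
    using M.centerD[OF z(2)] assms z by (simp add: M.m_assoc carrier_eq)
  also have "\<dots> = s \<otimes>\<^bsub>M\<^esub> h \<otimes>\<^bsub>G\<^esub> z"
    using mult_brace_centre_right[OF assms(3)] assms by simp
  finally show ?thesis
    unfolding brace_lambda_def using G.inv_mult_center_cancel assms z by simp
qed

lemma mult_sub_add_brace_centre_invariant:
  assumes "s \<in> carrier G" "s' \<in> carrier G" "z \<in> brace_centre G M" "z' \<in> brace_centre G M"
  shows "((s \<otimes>\<^bsub>G\<^esub> z) \<otimes>\<^bsub>M\<^esub> (s' \<otimes>\<^bsub>G\<^esub> z')) \<otimes>\<^bsub>G\<^esub> inv\<^bsub>G\<^esub> ((s \<otimes>\<^bsub>G\<^esub> z) \<otimes>\<^bsub>G\<^esub> (s' \<otimes>\<^bsub>G\<^esub> z'))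
       = (s \<otimes>\<^bsub>M\<^esub> s') \<otimes>\<^bsub>G\<^esub> inv\<^bsub>G\<^esub> (s \<otimes>\<^bsub>G\<^esub> s')"
proof -
  have z: "z \<in> carrier G" "z' \<in> carrier G" "z \<in> center M" "z \<in> center G"
    using assms(3,4) brace_centre_subset_carrier brace_centre_subset_center_mult
      brace_centre_subset_center_add by blast+
  have zz': "z \<otimes>\<^bsub>M\<^esub> z' = z \<otimes>\<^bsub>G\<^esub> z'" "z \<otimes>\<^bsub>G\<^esub> z' \<in> brace_centre G M"
    using mult_brace_centre_left[OF assms(3) z(2)] subgroup.m_closed[OF subgroup_brace_centre_add assms(3,4)]
    by auto
  have "(s \<otimes>\<^bsub>G\<^esub> z) \<otimes>\<^bsub>M\<^esub> (s' \<otimes>\<^bsub>G\<^esub> z') = (s \<otimes>\<^bsub>M\<^esub> z) \<otimes>\<^bsub>M\<^esub> (s' \<otimes>\<^bsub>M\<^esub> z')"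
    using mult_brace_centre_right assms by simp
  also have "\<dots> = (s \<otimes>\<^bsub>M\<^esub> s') \<otimes>\<^bsub>M\<^esub> (z \<otimes>\<^bsub>M\<^esub> z')"
    using M.mult_center_mult assms z by (simp add: carrier_eq)
  also have "\<dots> = (s \<otimes>\<^bsub>M\<^esub> s') \<otimes>\<^bsub>G\<^esub> (z \<otimes>\<^bsub>G\<^esub> z')"
    using mult_brace_centre_right[OF zz'(2)] assms zz'(1) by simp
  finally have "(s \<otimes>\<^bsub>G\<^esub> z) \<otimes>\<^bsub>M\<^esub> (s' \<otimes>\<^bsub>G\<^esub> z') = (s \<otimes>\<^bsub>M\<^esub> s') \<otimes>\<^bsub>G\<^esub> (z \<otimes>\<^bsub>G\<^esub> z')" .
  moreover have "(s \<otimes>\<^bsub>G\<^esub> z) \<otimes>\<^bsub>G\<^esub> (s' \<otimes>\<^bsub>G\<^esub> z') = (s \<otimes>\<^bsub>G\<^esub> s') \<otimes>\<^bsub>G\<^esub> (z \<otimes>\<^bsub>G\<^esub> z')"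
    using G.mult_center_mult assms z by simp
  ultimately show ?thesis using G.mult_inv_mult_cancel assms z by simp
qed

context
  fixes S assumes subbrace: "subbrace G M S"
    and supplement: "S <#>\<^bsub>G\<^esub> brace_centre G M = carrier G"
begin

lemma supplement_decompose:
  assumes "a \<in> carrier G"
  obtains s z where "s \<in> S" "z \<in> brace_centre G M" "a = s \<otimes>\<^bsub>G\<^esub> z"
  using assms supplement unfolding set_mult_def by blast

lemma brace_ideal_if_supplement: "brace_ideal G M S"
proof -
  have SG: "subgroup S G" and SM: "subgroup S M" using subbrace unfolding subbrace_def by blast+
  have "S \<lhd> G" using G.normal_if_set_mult_center[OF SG supplement brace_centre_subset_center_add] .
  moreover have "S <#>\<^bsub>M\<^esub> brace_centre G M = carrier M"
    using set_mult_brace_centre[OF subgroup.subset[OF SG]] supplement carrier_eq by simp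
  then have "S \<lhd> M" using M.normal_if_set_mult_center[OF SM _ brace_centre_subset_center_mult] by blast
  moreover have "brace_lambda G M b h \<in> S" if b: "b \<in> carrier G" and h: "h \<in> S" for b h
  proof -
    obtain s z where sz: "s \<in> S" "z \<in> brace_centre G M" "b = s \<otimes>\<^bsub>G\<^esub> z"
      using supplement_decompose[OF b] .
    then have "brace_lambda G M b h = inv\<^bsub>G\<^esub> s \<otimes>\<^bsub>G\<^esub> (s \<otimes>\<^bsub>M\<^esub> h)"
      using brace_lambda_mult_brace_centre h subgroup.mem_carrier[OF SG]
      unfolding brace_lambda_def by simp
    then show ?thesis
      using sz(1) h SG SM by (simp add: subgroup.m_closed subgroup.m_inv_closed)
  qed
  ultimately show ?thesis unfolding brace_ideal_def by blast
qed

lemma derived_gens_subset_if_supplement: "derived_gens G M \<subseteq> S"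
proof
  have SG: "subgroup S G" and SM: "subgroup S M" using subbrace unfolding subbrace_def by blast+
  fix x assume "x \<in> derived_gens G M"
  then obtain a b where ab: "a \<in> carrier G" "b \<in> carrier G" and
    x: "x = inv\<^bsub>G\<^esub> a \<otimes>\<^bsub>G\<^esub> inv\<^bsub>G\<^esub> b \<otimes>\<^bsub>G\<^esub> a \<otimes>\<^bsub>G\<^esub> b
       \<or> x = inv\<^bsub>M\<^esub> a \<otimes>\<^bsub>M\<^esub> inv\<^bsub>M\<^esub> b \<otimes>\<^bsub>M\<^esub> a \<otimes>\<^bsub>M\<^esub> b
       \<or> x = (a \<otimes>\<^bsub>M\<^esub> b) \<otimes>\<^bsub>G\<^esub> inv\<^bsub>G\<^esub> (a \<otimes>\<^bsub>G\<^esub> b)"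
    unfolding derived_gens_def by blast
  obtain s z where sz: "s \<in> S" "z \<in> brace_centre G M" "a = s \<otimes>\<^bsub>G\<^esub> z"
    using supplement_decompose[OF ab(1)] .
  obtain s' z' where sz': "s' \<in> S" "z' \<in> brace_centre G M" "b = s' \<otimes>\<^bsub>G\<^esub> z'"
    using supplement_decompose[OF ab(2)] .
  have s: "s \<in> carrier G" "s' \<in> carrier G" using sz sz' subgroup.mem_carrier[OF SG] by blast+
  have z: "z \<in> center G" "z' \<in> center G" "z \<in> center M" "z' \<in> center M"
    using sz sz' brace_centre_subset_center_add brace_centre_subset_center_mult by blast+
  have "inv\<^bsub>G\<^esub> a \<otimes>\<^bsub>G\<^esub> inv\<^bsub>G\<^esub> b \<otimes>\<^bsub>G\<^esub> a \<otimes>\<^bsub>G\<^esub> b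
      = inv\<^bsub>G\<^esub> s \<otimes>\<^bsub>G\<^esub> inv\<^bsub>G\<^esub> s' \<otimes>\<^bsub>G\<^esub> s \<otimes>\<^bsub>G\<^esub> s'"
    unfolding sz(3) sz'(3) using G.commutator_mult_center s z by simp
  moreover have "inv\<^bsub>M\<^esub> a \<otimes>\<^bsub>M\<^esub> inv\<^bsub>M\<^esub> b \<otimes>\<^bsub>M\<^esub> a \<otimes>\<^bsub>M\<^esub> b
      = inv\<^bsub>M\<^esub> s \<otimes>\<^bsub>M\<^esub> inv\<^bsub>M\<^esub> s' \<otimes>\<^bsub>M\<^esub> s \<otimes>\<^bsub>M\<^esub> s'"
  proof -
    have "a = s \<otimes>\<^bsub>M\<^esub> z" "b = s' \<otimes>\<^bsub>M\<^esub> z'"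
      using sz sz' s mult_brace_centre_right by simp_all
    then show ?thesis using M.commutator_mult_center s z by (simp add: carrier_eq)
  qed
  moreover have "(a \<otimes>\<^bsub>M\<^esub> b) \<otimes>\<^bsub>G\<^esub> inv\<^bsub>G\<^esub> (a \<otimes>\<^bsub>G\<^esub> b) = (s \<otimes>\<^bsub>M\<^esub> s') \<otimes>\<^bsub>G\<^esub> inv\<^bsub>G\<^esub> (s \<otimes>\<^bsub>G\<^esub> s')"
    unfolding sz(3) sz'(3) using mult_sub_add_brace_centre_invariant s sz(2) sz'(2) by simp
  ultimately have "x = inv\<^bsub>G\<^esub> s \<otimes>\<^bsub>G\<^esub> inv\<^bsub>G\<^esub> s' \<otimes>\<^bsub>G\<^esub> s \<otimes>\<^bsub>G\<^esub> s'
       \<or> x = inv\<^bsub>M\<^esub> s \<otimes>\<^bsub>M\<^esub> inv\<^bsub>M\<^esub> s' \<otimes>\<^bsub>M\<^esub> s \<otimes>\<^bsub>M\<^esub> s'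
       \<or> x = (s \<otimes>\<^bsub>M\<^esub> s') \<otimes>\<^bsub>G\<^esub> inv\<^bsub>G\<^esub> (s \<otimes>\<^bsub>G\<^esub> s')"
    using x by simp
  then show "x \<in> S"
    using sz(1) sz'(1) SG SM by (auto simp: subgroup.m_closed subgroup.m_inv_closed)
qed

end

lemma maximal_subbrace_centre_or_derived:
  assumes "maximal_subbrace G M S"
  shows "brace_centre G M \<subseteq> S \<or> derived_ideal G M \<subseteq> S"
proof (cases "brace_centre G M \<subseteq> S")
  case False
  then have supplement: "S <#>\<^bsub>G\<^esub> brace_centre G M = carrier G"
    using set_mult_brace_centre_eq_carrier assms by blast
  have "subbrace G M S" using assms unfolding maximal_subbrace_def by blast
  then have "derived_ideal G M \<subseteq> S"
    unfolding derived_ideal_def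
    using brace_ideal_if_supplement derived_gens_subset_if_supplement supplement by blast
  then show ?thesis by blast
qed simp

end

theorem corollary4p9:
  fixes G :: "('a, 'b) monoid_scheme" and M :: "('a, 'c) monoid_scheme"
  assumes "skew_brace G M" and "finite (carrier G)"
  shows "(\<forall>S. maximal_subbrace G M S \<longrightarrow>
            brace_centre G M \<subseteq> S \<or> derived_ideal G M \<subseteq> S)
         \<and> brace_centre G M \<inter> derived_ideal G M \<subseteq> frattini G M"
proof -
  interpret skew_left_brace G M using skew_left_braceI[OF assms(1)] .
  have centre_or_derived: "\<forall>S. maximal_subbrace G M S \<longrightarrow>
      brace_centre G M \<subseteq> S \<or> derived_ideal G M \<subseteq> S"
    using maximal_subbrace_centre_or_derived by blast
  moreover have "brace_centre G M \<inter> derived_ideal G M \<subseteq> frattini G M"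
    using centre_or_derived brace_centre_subset_carrier unfolding frattini_def by auto
  ultimately show ?thesis by blast
qed

end
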